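(* Let $k$ be a finite field, $n\ge1$, and $F=T_0G_1+G_0\in k[T_0,\dots,T_n]$ nonzero homogeneous with $G_0,G_1\in k[T_1,\dots,T_n]$ homogeneous and $G_1\ne0$. Then there is a natural bijection \[ X_F(k)=\mathrm{Cone}_p(X_{G_1}\cap X_{G_0})(k)\ \sqcup\ \bigl(\mathbb{P}^{n-1}_k(k)-X_{G_1}(k)\bigr). \]
   Context: $X_F=\mathrm{Proj}\,k[T_0,\dots,T_n]/(F)$, $X_{G_1}=\mathrm{Proj}\,k[T_1,\dots,T_n]/(G_1)\subseteq\mathbb{P}^{n-1}_k=\mathrm{Proj}\,k[T_1,\dots,T_n]$, and $X_{G_1}\cap X_{G_0}=\mathrm{Proj}\,k[T_1,\dots,T_n]/(G_1,G_0)$. For $X=\mathrm{Proj}\,k[T_1,\dots,T_n]/I$, the projective cone with vertex $p=[1:0:\dots:0]$ is $\mathrm{Cone}_p(X)=\mathrm{Proj}\,k[T_0,T_1,\dots,T_n]/I\,k[T_0,\dots,T_n]$. $Y(k)$ denotes the set of $k$-rational points of $Y$. *)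

theory Defs
  imports Main "HOL-Library.Poly_Mapping"
begin

text \<open>Multivariate polynomials in variables T_i (i :: nat) over a ring 'a:
  a finitely supported map from monomials (finitely supported exponent vectors) to coefficients.\<close>
type_synonym 'a mpoly = "(nat \<Rightarrow>\<^sub>0 nat) \<Rightarrow>\<^sub>0 'a"

definition mp_var :: "nat \<Rightarrow> 'a::comm_ring_1 mpoly" where
  "mp_var i = Poly_Mapping.single (Poly_Mapping.single i 1) 1"

definition mp_eval :: "'a::comm_ring_1 mpoly \<Rightarrow> (nat \<Rightarrow> 'a) \<Rightarrow> 'a" where
  "mp_eval P x = (\<Sum>m\<in>Poly_Mapping.keys P. Poly_Mapping.lookup P m * (\<Prod>i\<in>Poly_Mapping.keys m. x i ^ Poly_Mapping.lookup (m::nat \<Rightarrow>\<^sub>0 nat) i))"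

definition mp_in_vars :: "nat set \<Rightarrow> 'a::zero mpoly \<Rightarrow> bool" where
  "mp_in_vars V P \<longleftrightarrow> (\<forall>m\<in>Poly_Mapping.keys P. Poly_Mapping.keys m \<subseteq> V)"

definition mp_homogeneous :: "'a::zero mpoly \<Rightarrow> bool" where
  "mp_homogeneous P \<longleftrightarrow> (\<exists>d. \<forall>m\<in>Poly_Mapping.keys P. (\<Sum>i\<in>Poly_Mapping.keys m. Poly_Mapping.lookup (m::nat \<Rightarrow>\<^sub>0 nat) i) = d)"

text \<open>A k-rational point of a projective space with homogeneous coordinates T_i, i \<in> V,
  is the class of a nonzero vector x (with x i = 0 for i \<notin> V) under scaling.\<close>
definition proj_class :: "(nat \<Rightarrow> 'a::field) \<Rightarrow> (nat \<Rightarrow> 'a) set" where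
  "proj_class x = {y. \<exists>c. c \<noteq> 0 \<and> y = (\<lambda>i. c * x i)}"

definition proj_points :: "nat set \<Rightarrow> 'a::field mpoly set \<Rightarrow> (nat \<Rightarrow> 'a) set set" where
  "proj_points V S = {proj_class x | x. x \<noteq> (\<lambda>_. 0) \<and> (\<forall>i. i \<notin> V \<longrightarrow> x i = 0)
                        \<and> (\<forall>P\<in>S. mp_eval P x = 0)}"

definition X_F_points :: "nat \<Rightarrow> 'a::field mpoly \<Rightarrow> (nat \<Rightarrow> 'a) set set" where
  "X_F_points n F = proj_points {0..n} {F}"

definition sub_points :: "nat \<Rightarrow> 'a::field mpoly set \<Rightarrow> (nat \<Rightarrow> 'a) set set" where
  "sub_points n S = proj_points {1..n} S"

text \<open>Cone_p(X)(k) for X = Proj k[T_1..T_n]/(S), p = [1:0:...:0]: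
  Proj k[T_0..T_n]/(S) k[T_0..T_n].\<close>
definition cone_points :: "nat \<Rightarrow> 'a::field mpoly set \<Rightarrow> (nat \<Rightarrow> 'a) set set" where
  "cone_points n S = proj_points {0..n} S"

definition natural_map :: "'a::field mpoly \<Rightarrow> 'a mpoly \<Rightarrow>
    ((nat \<Rightarrow> 'a) set + (nat \<Rightarrow> 'a) set) \<Rightarrow> (nat \<Rightarrow> 'a) set" where
  "natural_map G0 G1 z = (case z of
      Inl c \<Rightarrow> c
    | Inr y \<Rightarrow> (let x = (SOME x. x \<in> y) in
                 proj_class (x(0 := - mp_eval G0 x / mp_eval G1 x))))"

end

theory Submission
  imports Defs
begin

text \<open>Since G0 and G1 do not involve T0, F(x) = x0 G1(x) + G0(x). Where G1 vanishes, F vanishes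
  iff G0 does, which gives the cone over the intersection of X_G1 and X_G0. Where G1(x) does not
  vanish, F(x) = 0 is a linear equation in x0 with the unique solution -G0(x)/G1(x), so projection
  from p identifies the rest of X_F with the complement of X_G1 in P^(n-1); homogeneity of F and
  G1 makes this compatible with rescaling.\<close>

definition mp_monom_eval :: "(nat \<Rightarrow>\<^sub>0 nat) \<Rightarrow> (nat \<Rightarrow> 'a::comm_ring_1) \<Rightarrow> 'a" where
  "mp_monom_eval m x = (\<Prod>i\<in>Poly_Mapping.keys m. x i ^ Poly_Mapping.lookup m i)"

lemma mp_monom_eval_superset:
  assumes "finite S" "Poly_Mapping.keys m \<subseteq> S"
  shows "mp_monom_eval m x = (\<Prod>i\<in>S. x i ^ Poly_Mapping.lookup m i)"
  unfolding mp_monom_eval_def using assms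
  by (intro prod.mono_neutral_left) (auto simp: in_keys_iff)

lemma mp_monom_eval_add: "mp_monom_eval (a + b) x = mp_monom_eval a x * mp_monom_eval b x"
proof -
  let ?S = "Poly_Mapping.keys a \<union> Poly_Mapping.keys b"
  have "mp_monom_eval (a + b) x = (\<Prod>i\<in>?S. x i ^ Poly_Mapping.lookup (a + b) i)"
    by (rule mp_monom_eval_superset) (auto dest: keys_add[THEN subsetD])
  also have "\<dots> = (\<Prod>i\<in>?S. x i ^ Poly_Mapping.lookup a i) * (\<Prod>i\<in>?S. x i ^ Poly_Mapping.lookup b i)"
    by (simp add: lookup_add power_add prod.distrib)
  also have "\<dots> = mp_monom_eval a x * mp_monom_eval b x"
    using mp_monom_eval_superset[of ?S a x] mp_monom_eval_superset[of ?S b x] by simp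
  finally show ?thesis .
qed

lemma mp_monom_eval_var: "mp_monom_eval (Poly_Mapping.single i 1) x = x i"
  by (simp add: mp_monom_eval_def)

lemma mp_monom_eval_scale:
  "mp_monom_eval m (\<lambda>i. c * x i) = c ^ (\<Sum>i\<in>Poly_Mapping.keys m. Poly_Mapping.lookup m i) * mp_monom_eval m x"
  by (simp add: mp_monom_eval_def power_mult_distrib prod.distrib power_sum)

lemma mp_eval_eq_sum: "mp_eval P x = (\<Sum>m\<in>Poly_Mapping.keys P. Poly_Mapping.lookup P m * mp_monom_eval m x)"
  by (simp add: mp_eval_def mp_monom_eval_def)

lemma mp_eval_superset:
  assumes "finite S" "Poly_Mapping.keys P \<subseteq> S"
  shows "mp_eval P x = (\<Sum>m\<in>S. Poly_Mapping.lookup P m * mp_monom_eval m x)"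
  unfolding mp_eval_eq_sum using assms
  by (intro sum.mono_neutral_left) (auto simp: in_keys_iff)

lemma mp_eval_add: "mp_eval (P + Q) x = mp_eval P x + mp_eval Q x"
proof -
  let ?S = "Poly_Mapping.keys P \<union> Poly_Mapping.keys Q"
  have "mp_eval (P + Q) x = (\<Sum>m\<in>?S. Poly_Mapping.lookup (P + Q) m * mp_monom_eval m x)"
    by (rule mp_eval_superset) (auto dest: keys_add[THEN subsetD])
  also have "\<dots> = (\<Sum>m\<in>?S. Poly_Mapping.lookup P m * mp_monom_eval m x)
                 + (\<Sum>m\<in>?S. Poly_Mapping.lookup Q m * mp_monom_eval m x)"
    by (simp add: lookup_add distrib_right sum.distrib)
  also have "\<dots> = mp_eval P x + mp_eval Q x"
    using mp_eval_superset[of ?S P x] mp_eval_superset[of ?S Q x] by simp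
  finally show ?thesis .
qed

lemma mp_eval_single: "mp_eval (Poly_Mapping.single m c) x = c * mp_monom_eval m x"
  by (simp add: mp_eval_eq_sum)

lemma mp_eval_var_mult: "mp_eval (mp_var i * P) x = x i * mp_eval P x"
proof (induction P rule: update_induct)
  case const
  then show ?case by (simp add: mp_eval_def)
next
  case (update P m c)
  have "Poly_Mapping.update m c P = Poly_Mapping.single m c + P"
    using update.hyps
    by (intro poly_mapping_eqI) (auto simp: lookup_update lookup_add lookup_single when_def in_keys_iff)
  with update.IH show ?case
    by (simp add: distrib_left mp_eval_add mp_var_def mult_single mp_eval_single
        mp_monom_eval_add mp_monom_eval_var[simplified] algebra_simps)
qed

lemma mp_eval_scale_homogeneous:
  assumes "mp_homogeneous P"
  obtains d where "\<And>c x. mp_eval P (\<lambda>i. c * x i) = c ^ d * mp_eval P x"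
proof -
  from assms obtain d
    where d: "\<And>m. m \<in> Poly_Mapping.keys P \<Longrightarrow> (\<Sum>i\<in>Poly_Mapping.keys m. Poly_Mapping.lookup m i) = d"
    unfolding mp_homogeneous_def by blast
  have "mp_eval P (\<lambda>i. c * x i) = c ^ d * mp_eval P x" for c x
    unfolding mp_eval_eq_sum
    by (simp add: mp_monom_eval_scale d sum_distrib_left algebra_simps cong: sum.cong)
  then show ?thesis using that by blast
qed

lemma mp_eval_scale_eq_0:
  assumes "mp_homogeneous P" "mp_eval P x = 0"
  shows "mp_eval P (\<lambda>i. c * x i) = 0"
  using assms by (metis mp_eval_scale_homogeneous mult_zero_right)

lemma mp_eval_zero_if_homogeneous_root:
  assumes "mp_homogeneous P" "mp_eval P x = 0"
  shows "mp_eval P (\<lambda>_. 0) = 0"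
  using mp_eval_scale_eq_0[OF assms, of 0] by simp

lemma mp_eval_cong_vars:
  assumes "mp_in_vars V P" "\<And>i. i \<in> V \<Longrightarrow> x i = y i"
  shows "mp_eval P x = mp_eval P y"
  unfolding mp_eval_def
  by (intro sum.cong arg_cong[where f="(*) _"] prod.cong refl)
     (use assms in \<open>fastforce simp: mp_in_vars_def\<close>)

lemma proj_class_self: "x \<in> proj_class x"
  unfolding proj_class_def by (auto intro: exI[of _ 1])

lemma proj_class_scale:
  assumes "(c::'a::field) \<noteq> 0"
  shows "proj_class (\<lambda>i. c * x i) = proj_class x"
  unfolding proj_class_def
proof (intro set_eqI iffI; clarsimp)
  fix d :: 'a assume "d \<noteq> 0"
  with assms show "\<exists>e. e \<noteq> 0 \<and> (\<lambda>i. d * (c * x i)) = (\<lambda>i. e * x i)"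
    by (intro exI[of _ "d * c"]) (auto simp: mult.assoc)
next
  fix d :: 'a assume "d \<noteq> 0"
  with assms show "\<exists>e. e \<noteq> 0 \<and> (\<lambda>i. d * x i) = (\<lambda>i. e * (c * x i))"
    by (intro exI[of _ "d / c"]) auto
qed

lemma proj_class_eq_iff:
  "proj_class x = proj_class y \<longleftrightarrow> (\<exists>c::'a::field. c \<noteq> 0 \<and> y = (\<lambda>i. c * x i))"
proof
  assume "proj_class x = proj_class y"
  then show "\<exists>c. c \<noteq> 0 \<and> y = (\<lambda>i. c * x i)"
    using proj_class_self[of y] unfolding proj_class_def by auto
qed (use proj_class_scale in auto)

lemma mp_eval_proj_class_eq_0:
  assumes "mp_homogeneous P" "proj_class x = proj_class y" "mp_eval P x = 0"
  shows "mp_eval P y = 0"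
proof -
  from assms(2) obtain c where "y = (\<lambda>i. c * x i)"
    unfolding proj_class_eq_iff by blast
  with assms(1,3) show ?thesis
    by (simp add: mp_eval_scale_eq_0)
qed

lemma proj_points_Int:
  assumes "\<forall>P\<in>T. mp_homogeneous P"
  shows "proj_points V S \<inter> proj_points V T = proj_points V (S \<union> T)"
proof
  show "proj_points V S \<inter> proj_points V T \<subseteq> proj_points V (S \<union> T)"
  proof
    fix p assume "p \<in> proj_points V S \<inter> proj_points V T"
    then obtain x y where x: "p = proj_class x" "x \<noteq> (\<lambda>_. 0)" "\<forall>i. i \<notin> V \<longrightarrow> x i = 0"
        "\<forall>P\<in>S. mp_eval P x = 0"
      and y: "p = proj_class y" "\<forall>P\<in>T. mp_eval P y = 0"
      unfolding proj_points_def by blast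
    have "\<forall>P\<in>T. mp_eval P x = 0"
      using assms x(1) y mp_eval_proj_class_eq_0 by metis
    with x show "p \<in> proj_points V (S \<union> T)"
      unfolding proj_points_def by blast
  qed
qed (auto simp: proj_points_def)

lemma proj_points_cong:
  assumes "\<And>x. (\<forall>P\<in>S. mp_eval P x = 0) \<longleftrightarrow> (\<forall>P\<in>T. mp_eval P x = 0)"
  shows "proj_points V S = proj_points V T"
  unfolding proj_points_def using assms by simp

lemma proj_points_Diff_hypersurface:
  assumes "mp_homogeneous P"
  shows "proj_points V S - proj_points V {P} =
    {proj_class x | x. x \<noteq> (\<lambda>_. 0) \<and> (\<forall>i. i \<notin> V \<longrightarrow> x i = 0) \<and> (\<forall>Q\<in>S. mp_eval Q x = 0)
                       \<and> mp_eval P x \<noteq> 0}" (is "_ = ?R")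
proof (intro set_eqI iffI)
  fix p assume "p \<in> proj_points V S - proj_points V {P}"
  then obtain x where x: "p = proj_class x" "x \<noteq> (\<lambda>_. 0)" "\<forall>i. i \<notin> V \<longrightarrow> x i = 0"
      "\<forall>Q\<in>S. mp_eval Q x = 0" and "p \<notin> proj_points V {P}"
    unfolding proj_points_def by blast
  then have "mp_eval P x \<noteq> 0"
    unfolding proj_points_def by blast
  with x show "p \<in> ?R"
    by blast
next
  fix p assume "p \<in> ?R"
  then obtain x where x: "p = proj_class x" "x \<noteq> (\<lambda>_. 0)" "\<forall>i. i \<notin> V \<longrightarrow> x i = 0"
      "\<forall>Q\<in>S. mp_eval Q x = 0" "mp_eval P x \<noteq> 0"
    by blast
  have "p \<notin> proj_points V {P}"
  proof
    assume "p \<in> proj_points V {P}"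
    then obtain y where "p = proj_class y" "mp_eval P y = 0"
      unfolding proj_points_def by blast
    with x assms show False
      using mp_eval_proj_class_eq_0 by metis
  qed
  with x show "p \<in> proj_points V S - proj_points V {P}"
    unfolding proj_points_def by blast
qed

lemma bij_betw_Plus:
  assumes "bij_betw (f \<circ> Inl) A C" "bij_betw (f \<circ> Inr) B D" "C \<inter> D = {}"
  shows "bij_betw f (A <+> B) (C \<union> D)"
proof -
  have "bij_betw f (Inl ` A) C" "bij_betw f (Inr ` B) D"
    using assms(1,2) by (simp_all add: bij_betw_def inj_on_def image_image)
  then have "bij_betw f (Inl ` A \<union> Inr ` B) (C \<union> D)"
    using assms(3) by (rule bij_betw_combine)
  then show ?thesis
    by (simp add: Plus_def)
qed

locale linear_in_T0 =
  fixes n :: nat and G0 G1 F :: "'a::field mpoly"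
  assumes F_eq: "F = mp_var 0 * G1 + G0"
    and G0_vars: "mp_in_vars {1..n} G0"
    and G1_vars: "mp_in_vars {1..n} G1"
    and F_homogeneous: "mp_homogeneous F"
    and G1_homogeneous: "mp_homogeneous G1"
begin

definition lift :: "(nat \<Rightarrow> 'a) \<Rightarrow> nat \<Rightarrow> 'a" where
  "lift s = s(0 := - mp_eval G0 s / mp_eval G1 s)"

lemma mp_eval_F: "mp_eval F x = x 0 * mp_eval G1 x + mp_eval G0 x"
  by (simp add: F_eq mp_eval_add mp_eval_var_mult)

lemma mp_eval_G0_upd_0 [simp]: "mp_eval G0 (x(0 := t)) = mp_eval G0 x"
  using G0_vars by (rule mp_eval_cong_vars) simp

lemma mp_eval_G1_upd_0 [simp]: "mp_eval G1 (x(0 := t)) = mp_eval G1 x"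
  using G1_vars by (rule mp_eval_cong_vars) simp

lemma mp_eval_F_upd_0_eq_0_iff:
  assumes "mp_eval G1 s \<noteq> 0"
  shows "mp_eval F (s(0 := t)) = 0 \<longleftrightarrow> t = - mp_eval G0 s / mp_eval G1 s"
  using assms by (auto simp: mp_eval_F field_simps eq_neg_iff_add_eq_0)

lemma mp_eval_F_lift:
  assumes "mp_eval G1 s \<noteq> 0"
  shows "mp_eval F (lift s) = 0"
  unfolding lift_def using assms by (simp add: mp_eval_F_upd_0_eq_0_iff)

lemma lift_scale:
  assumes "mp_eval G1 s \<noteq> 0" "c \<noteq> 0"
  shows "lift (\<lambda>i. c * s i) = (\<lambda>i. c * lift s i)"
proof -
  let ?t = "\<lambda>i. c * s i"
  obtain d where "mp_eval G1 ?t = c ^ d * mp_eval G1 s"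
    using mp_eval_scale_homogeneous[OF G1_homogeneous] by blast
  with assms have t: "mp_eval G1 ?t \<noteq> 0"
    by simp
  have scaled_lift: "(\<lambda>i. c * lift s i) = ?t(0 := c * lift s 0)"
    by (auto simp: lift_def)
  have "mp_eval F (\<lambda>i. c * lift s i) = 0"
    using F_homogeneous mp_eval_F_lift[OF assms(1)] by (rule mp_eval_scale_eq_0)
  then have "c * lift s 0 = - mp_eval G0 ?t / mp_eval G1 ?t"
    unfolding scaled_lift using t by (simp add: mp_eval_F_upd_0_eq_0_iff)
  then show ?thesis
    unfolding scaled_lift by (simp add: lift_def)
qed

lemma natural_map_Inr:
  assumes "mp_eval G1 s \<noteq> 0"
  shows "natural_map G0 G1 (Inr (proj_class s)) = proj_class (lift s)"
proof -
  define t where "t = (SOME t. t \<in> proj_class s)"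
  have "t \<in> proj_class s"
    unfolding t_def by (rule someI[where x = s]) (rule proj_class_self)
  then obtain c where c: "c \<noteq> 0" "t = (\<lambda>i. c * s i)"
    unfolding proj_class_def by blast
  have "natural_map G0 G1 (Inr (proj_class s)) = proj_class (lift t)"
    by (simp add: natural_map_def lift_def t_def Let_def)
  also have "\<dots> = proj_class (lift s)"
    using assms c by (simp add: lift_scale proj_class_scale)
  finally show ?thesis .
qed

lemma lift_nonzero:
  assumes "s \<noteq> (\<lambda>_. 0)" "s 0 = 0"
  shows "lift s \<noteq> (\<lambda>_. 0)"
proof -
  obtain j where "s j \<noteq> 0"
    using assms(1) by blast
  moreover from this have "j \<noteq> 0"
    using assms(2) by metis
  ultimately show ?thesis
    by (metis fun_upd_other lift_def)
qed

lemma root_eq_lift: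
  assumes "mp_eval F x = 0" "mp_eval G1 x \<noteq> 0"
  shows "x = lift (x(0 := 0))"
proof -
  have "x = (x(0 := 0))(0 := x 0)"
    by simp
  with assms have "x 0 = - mp_eval G0 (x(0 := 0)) / mp_eval G1 (x(0 := 0))"
    by (metis mp_eval_F_upd_0_eq_0_iff mp_eval_G1_upd_0)
  then show ?thesis
    by (simp add: lift_def) (metis fun_upd_triv)
qed

text \<open>Otherwise x would represent the vertex p. As F(p) = 0 by homogeneity, both x 0 and 0
  would then solve the equation in T0, which has a unique solution.\<close>
lemma root_not_vertex:
  assumes "x \<noteq> (\<lambda>_. 0)" "mp_eval F x = 0" "mp_eval G1 x \<noteq> 0"
  shows "x(0 := 0) \<noteq> (\<lambda>_. 0)"
proof
  assume w: "x(0 := 0) = (\<lambda>_. 0)"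
  let ?s = "x(0 := 0)"
  have "mp_eval F (?s(0 := 0)) = 0"
    using mp_eval_zero_if_homogeneous_root[OF F_homogeneous assms(2)] by (simp add: w fun_upd_idem)
  moreover have "mp_eval F (?s(0 := x 0)) = 0"
    using assms(2) by simp
  moreover have "mp_eval G1 ?s \<noteq> 0"
    using assms(3) by simp
  ultimately have "x 0 = 0"
    using mp_eval_F_upd_0_eq_0_iff by metis
  with w assms(1) show False
    by (metis fun_upd_triv)
qed

lemma lift_image:
  "lift ` {s. s \<noteq> (\<lambda>_. 0) \<and> (\<forall>i. i \<notin> {1..n} \<longrightarrow> s i = 0) \<and> mp_eval G1 s \<noteq> 0}
     = {x. x \<noteq> (\<lambda>_. 0) \<and> (\<forall>i. i \<notin> {0..n} \<longrightarrow> x i = 0) \<and> mp_eval F x = 0 \<and> mp_eval G1 x \<noteq> 0}"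
    (is "lift ` ?B = ?C")
proof
  show "lift ` ?B \<subseteq> ?C"
    using lift_nonzero mp_eval_F_lift by (auto simp: lift_def)
  show "?C \<subseteq> lift ` ?B"
  proof
    fix x assume x: "x \<in> ?C"
    then have "x(0 := 0) \<in> ?B"
      using root_not_vertex by auto
    moreover have "x = lift (x(0 := 0))"
      using x root_eq_lift by blast
    ultimately show "x \<in> lift ` ?B"
      by blast
  qed
qed

lemma proj_class_lift_eqD:
  assumes "s 0 = 0" "s' 0 = 0" "proj_class (lift s) = proj_class (lift s')"
  shows "proj_class s = proj_class s'"
proof -
  obtain c where c: "c \<noteq> 0" "lift s' = (\<lambda>i. c * lift s i)"
    using assms(3) unfolding proj_class_eq_iff by blast
  have "s' = (\<lambda>i. c * s i)"
  proof
    fix i show "s' i = c * s i"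
      using assms(1,2) fun_cong[OF c(2), of i] by (cases "i = 0") (auto simp: lift_def)
  qed
  with c(1) show ?thesis
    by (simp add: proj_class_scale)
qed

lemma bij_betw_natural_map_Inr:
  "bij_betw (natural_map G0 G1 \<circ> Inr)
     (proj_points {1..n} {} - proj_points {1..n} {G1})
     (proj_points {0..n} {F} - proj_points {0..n} {G1})"
proof -
  define B where "B = {s. s \<noteq> (\<lambda>_. 0) \<and> (\<forall>i. i \<notin> {1..n} \<longrightarrow> s i = 0) \<and> mp_eval G1 s \<noteq> 0}"
  have dom: "proj_points {1..n} {} - proj_points {1..n} {G1} = proj_class ` B"
    unfolding proj_points_Diff_hypersurface[OF G1_homogeneous] B_def by blast
  have cod: "proj_points {0..n} {F} - proj_points {0..n} {G1} = proj_class ` lift ` B"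
    unfolding proj_points_Diff_hypersurface[OF G1_homogeneous] B_def lift_image by blast
  have map: "(natural_map G0 G1 \<circ> Inr) (proj_class s) = proj_class (lift s)" if "s \<in> B" for s
    using that natural_map_Inr unfolding B_def by simp
  have "inj_on (natural_map G0 G1 \<circ> Inr) (proj_class ` B)"
  proof (rule inj_onI)
    fix p q assume "p \<in> proj_class ` B" "q \<in> proj_class ` B"
      and eq: "(natural_map G0 G1 \<circ> Inr) p = (natural_map G0 G1 \<circ> Inr) q"
    then obtain s s' where s: "s \<in> B" "p = proj_class s" and s': "s' \<in> B" "q = proj_class s'"
      by blast
    have "proj_class (lift s) = proj_class (lift s')"
      using eq map[OF s(1)] map[OF s'(1)] s(2) s'(2) by simp
    moreover have "s 0 = 0" "s' 0 = 0"
      using s(1) s'(1) unfolding B_def by auto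
    ultimately show "p = q"
      using s(2) s'(2) proj_class_lift_eqD by blast
  qed
  moreover have "(natural_map G0 G1 \<circ> Inr) ` proj_class ` B = proj_class ` lift ` B"
    using map by (force simp: image_image)
  ultimately show ?thesis
    unfolding dom cod bij_betw_def by blast
qed

lemma proj_points_F_Int_G1:
  "proj_points {0..n} {F} \<inter> proj_points {0..n} {G1} = proj_points {0..n} {G1, G0}"
proof -
  have "proj_points {0..n} {F} \<inter> proj_points {0..n} {G1} = proj_points {0..n} {G1, F}"
    using G1_homogeneous by (simp add: proj_points_Int)
  also have "\<dots> = proj_points {0..n} {G1, G0}"
    by (rule proj_points_cong) (auto simp: mp_eval_F)
  finally show ?thesis .
qed

end

theorem proposition5p5:
  fixes F G0 G1 :: "'a::field mpoly" and n :: nat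
  assumes "finite (UNIV :: 'a set)"
    and "n \<ge> 1"
    and "F \<noteq> 0" and "mp_homogeneous F"
    and "F = mp_var 0 * G1 + G0"
    and "mp_in_vars {1..n} G0" and "mp_homogeneous G0"
    and "mp_in_vars {1..n} G1" and "mp_homogeneous G1"
    and "G1 \<noteq> 0"
  shows "bij_betw (natural_map G0 G1)
           (cone_points n {G1, G0} <+> ((sub_points n {} - sub_points n {G1})))
           (X_F_points n F)"
proof -
  interpret linear_in_T0 n G0 G1 F
    using assms by unfold_locales auto
  let ?X = "proj_points {0..n} {F}" and ?V = "proj_points {0..n} {G1}"
  have "bij_betw (natural_map G0 G1 \<circ> Inl) (cone_points n {G1, G0}) (?X \<inter> ?V)"
    by (simp add: cone_points_def proj_points_F_Int_G1 natural_map_def comp_def bij_betw_def)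
  moreover have "bij_betw (natural_map G0 G1 \<circ> Inr) (sub_points n {} - sub_points n {G1}) (?X - ?V)"
    unfolding sub_points_def by (rule bij_betw_natural_map_Inr)
  ultimately have "bij_betw (natural_map G0 G1)
      (cone_points n {G1, G0} <+> (sub_points n {} - sub_points n {G1})) (?X \<inter> ?V \<union> (?X - ?V))"
    by (rule bij_betw_Plus) blast
  then show ?thesis
    unfolding X_F_points_def Int_Diff_Un .
qed

end
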